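(* Let $R$ be an affine algebra over a field $K$ with no zero divisors. If $R$ is not amenable, then $R$ is paradoxical.
   Context: An affine algebra is a finitely generated associative algebra over $K$, not necessarily unital. $R$ is amenable if there exist finite-dimensional $K$-subspaces $W_1\subseteq W_2\subseteq\cdots$ with $\bigcup_nW_n=R$ such that for every $r\in R$, $\lim_{n\to\infty}\dim_K(W_nr+W_n)/\dim_K(W_n)=1$. For $A\subseteq R$, $r\in R$, $Ar=\{ar:a\in A\}$. Subsets $B_1,\dots,B_k$ of $R$ are mutually independent if they are pairwise disjoint and their union is linearly independent over $K$. $R$ (without zero divisors) is paradoxical if every basis $\{f_i\}_{i\ge1}$ of $R$ over $K$ can be written as a disjoint union $A_1\cup\cdots\cup A_m$ such that for some nonzero $g_1,h_1,\dots,g_m,h_m\in R$ the sets $A_1g_1,A_1h_1,\dots,A_mg_m,A_mh_m$ are mutually independent. *)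

theory Defs
  imports Complex_Main
begin

definition algebra_over :: "('k::field \<Rightarrow> 'r::ring \<Rightarrow> 'r) \<Rightarrow> bool" where
  "algebra_over scale \<longleftrightarrow> vector_space scale \<and>
     (\<forall>a x y. scale a (x * y) = scale a x * y \<and> scale a (x * y) = x * scale a y)"

definition subalgebra :: "('k::field \<Rightarrow> 'r::ring \<Rightarrow> 'r) \<Rightarrow> 'r set \<Rightarrow> bool" where
  "subalgebra scale S \<longleftrightarrow> module.subspace scale S \<and> (\<forall>x\<in>S. \<forall>y\<in>S. x * y \<in> S)"

text \<open>Affine: finitely generated as an algebra, i.e. some finite set is
contained in no proper subalgebra.\<close>
definition affine_algebra :: "('k::field \<Rightarrow> 'r::ring \<Rightarrow> 'r) \<Rightarrow> bool" where
  "affine_algebra scale \<longleftrightarrow> algebra_over scale \<and>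
     (\<exists>G. finite G \<and> (\<forall>S. subalgebra scale S \<and> G \<subseteq> S \<longrightarrow> S = UNIV))"

definition no_zero_divisors_alg :: "'r::ring itself \<Rightarrow> bool" where
  "no_zero_divisors_alg _ \<longleftrightarrow> (\<forall>x y::'r. x * y = 0 \<longrightarrow> x = 0 \<or> y = 0)"

definition right_mult_set :: "'r::ring set \<Rightarrow> 'r \<Rightarrow> 'r set" where
  "right_mult_set A r = (\<lambda>a. a * r) ` A"

definition amenable :: "('k::field \<Rightarrow> 'r::ring \<Rightarrow> 'r) \<Rightarrow> bool" where
  "amenable scale \<longleftrightarrow>
     (\<exists>W :: nat \<Rightarrow> 'r set.
        (\<forall>n. module.subspace scale (W n) \<and> (\<exists>B. finite B \<and> module.span scale B = W n)) \<and>
        (\<forall>n. W n \<subseteq> W (Suc n)) \<and>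
        (\<Union>n. W n) = UNIV \<and>
        (\<forall>r. (\<lambda>n. real (vector_space.dim scale
                     {x + y | x y. x \<in> right_mult_set (W n) r \<and> y \<in> W n})
                   / real (vector_space.dim scale (W n))) \<longlonglongrightarrow> 1))"

definition mutually_independent ::
    "('k::field \<Rightarrow> 'r::ring \<Rightarrow> 'r) \<Rightarrow> 'i set \<Rightarrow> ('i \<Rightarrow> 'r set) \<Rightarrow> bool" where
  "mutually_independent scale I B \<longleftrightarrow>
     (\<forall>i\<in>I. \<forall>j\<in>I. i \<noteq> j \<longrightarrow> B i \<inter> B j = {}) \<and>
     module.independent scale (\<Union>i\<in>I. B i)"

definition paradoxical :: "('k::field \<Rightarrow> 'r::ring \<Rightarrow> 'r) \<Rightarrow> bool" where
  "paradoxical scale \<longleftrightarrow>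
     (\<forall>F :: 'r set. module.independent scale F \<and> module.span scale F = UNIV \<longrightarrow>
        (\<exists>(m::nat) (A :: nat \<Rightarrow> 'r set) (g :: nat \<Rightarrow> 'r) (h :: nat \<Rightarrow> 'r).
           F = (\<Union>i<m. A i) \<and>
           (\<forall>i<m. \<forall>j<m. i \<noteq> j \<longrightarrow> A i \<inter> A j = {}) \<and>
           (\<forall>i<m. g i \<noteq> 0 \<and> h i \<noteq> 0) \<and>
           mutually_independent scale ({..<m} \<times> UNIV)
             (\<lambda>(i, b). if b then right_mult_set (A i) (g i) else right_mult_set (A i) (h i))))"

end

theory Submission
  imports Defs "HOL-Library.Countable_Set" "HOL-Library.Set_Algebras"
begin

text \<open>Let \<open>G\<close> generate \<open>R\<close> and let \<open>M\<^sub>n\<close> be the set of products of at most \<open>n\<close>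
  generators. If \<open>R\<close> is infinite-dimensional and has no zero divisors, every nonzero
  finite-dimensional subspace \<open>X\<close> grows: \<open>dim (X + X M\<^sub>n) > dim X\<close>. Hence a set whose expansion
  ratio is below \<open>1 + \<epsilon>\<close> has dimension above \<open>1 / \<epsilon>\<close> and can absorb any fixed finite set; if such
  sets existed for all \<open>n\<close> and \<open>\<epsilon>\<close>, they would assemble into an exhausting Folner sequence. So
  non-amenability gives \<open>n\<close> and \<open>\<epsilon> > 0\<close> with \<open>dim (X + X M\<^sub>n) \<ge> (1 + \<epsilon>) dim X\<close> for all \<open>X\<close>,
  and iterating this yields a finite set \<open>S \<not>\<ni> 0\<close> with \<open>dim (A S) \<ge> 2 |A|\<close> for every finite
  independent \<open>A\<close>.

  For a basis \<open>F\<close> (countable, as \<open>R\<close> is affine) this is Rado's condition for the family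
  \<open>(f, b) \<mapsto> f S\<close> indexed by \<open>F \<times> bool\<close>. Rado's theorem, the linear version of Hall's theorem,
  gives every \<open>f\<close> two multipliers \<open>g\<^sub>f, h\<^sub>f \<in> S\<close> such that all \<open>f g\<^sub>f\<close>, \<open>f h\<^sub>f\<close> are distinct
  and linearly independent; grouping the basis elements by the pair \<open>(g\<^sub>f, h\<^sub>f)\<close> gives the
  paradoxical decomposition. Nonzero finite-dimensional algebras are amenable.\<close>

section \<open>Dimension of finitely spanned sets\<close>

context vector_space
begin

lemma dim_mono_bounded:
  assumes "V \<subseteq> span W" and "W \<subseteq> span C" and "finite C"
  shows "dim V \<le> dim W"
proof -
  obtain B where B: "B \<subseteq> V" "independent B" "V \<subseteq> span B" "card B = dim V"
    using basis_exists .
  obtain D where D: "D \<subseteq> W" "independent D" "W \<subseteq> span D" "card D = dim W"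
    using basis_exists .
  have "finite D"
    using independent_span_bound[OF \<open>finite C\<close> D(2)] D(1) assms(2) by blast
  moreover have "B \<subseteq> span D"
    using B(1) assms(1) D(3) span_minimal[OF D(3) subspace_span] by blast
  ultimately have "card B \<le> card D"
    using independent_span_bound[OF _ B(2)] by blast
  with B(4) D(4) show ?thesis by simp
qed

corollary dim_mono_finite: "V \<subseteq> span W \<Longrightarrow> finite W \<Longrightarrow> dim V \<le> dim W"
  using dim_mono_bounded[OF _ span_superset] .

corollary dim_subset_finite: "S \<subseteq> T \<Longrightarrow> finite T \<Longrightarrow> dim S \<le> dim T"
  using dim_mono_finite[OF subset_trans[OF _ span_superset]] .

lemma dim_Un_Int_le:
  assumes "finite P" and "finite Q"
  shows "dim (P \<union> Q) + dim (P \<inter> Q) \<le> dim P + dim Q"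
proof -
  obtain B0 where B0: "B0 \<subseteq> P \<inter> Q" "independent B0" "P \<inter> Q \<subseteq> span B0" "card B0 = dim (P \<inter> Q)"
    using basis_exists .
  obtain B1 where B1: "B0 \<subseteq> B1" "B1 \<subseteq> P" "independent B1" "P \<subseteq> span B1"
    using maximal_independent_subset_extend[of B0 P] B0 by blast
  obtain B2 where B2: "B0 \<subseteq> B2" "B2 \<subseteq> Q" "independent B2" "Q \<subseteq> span B2"
    using maximal_independent_subset_extend[of B0 Q] B0 by blast
  have fin: "finite B1" "finite B2"
    using B1(2) B2(2) assms finite_subset by blast+
  have "P \<union> Q \<subseteq> span (B1 \<union> B2)"
    using B1(4) B2(4) span_mono[of B1 "B1 \<union> B2"] span_mono[of B2 "B1 \<union> B2"] by blast
  then have "dim (P \<union> Q) \<le> card (B1 \<union> B2)"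
    using dim_le_card fin by blast
  moreover have "card B0 \<le> card (B1 \<inter> B2)"
    using B1(1) B2(1) fin by (intro card_mono) auto
  moreover have "card B1 = dim P" "card B2 = dim Q"
    using basis_card_eq_dim B1 B2 by blast+
  ultimately show ?thesis
    using card_Un_Int[OF fin] B0(4) by linarith
qed

corollary dim_Un_le: "finite P \<Longrightarrow> finite Q \<Longrightarrow> dim (P \<union> Q) \<le> dim P + dim Q"
  using dim_Un_Int_le[of P Q] by linarith

lemma dim_insert_finite:
  assumes "finite S" and "x \<notin> span S"
  shows "dim (insert x S) = Suc (dim S)"
proof -
  obtain B where B: "B \<subseteq> S" "independent B" "S \<subseteq> span B" "card B = dim S"
    using basis_exists .
  have "finite B"
    using B(1) assms(1) finite_subset by blast
  have "span B = span S"
    using B(1,3) by (simp add: span_eq span_superset subset_trans)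
  then have "x \<notin> span B" "span (insert x B) = span (insert x S)"
    using assms(2) by (simp_all add: span_insert)
  then have "dim (insert x S) = card (insert x B)"
    using dim_eq_card[of "insert x B" "insert x S"] independent_insertI[OF _ B(2)] by simp
  moreover have "x \<notin> B"
    using \<open>x \<notin> span B\<close> span_base by blast
  ultimately show ?thesis
    using B(4) \<open>finite B\<close> by simp
qed

lemma nonzero_if_dim_pos:
  assumes "0 < dim X"
  shows "\<exists>x\<in>X. x \<noteq> 0"
proof (rule ccontr)
  assume "\<not> ?thesis"
  then have "X \<subseteq> span {}"
    by auto
  then show False
    using dim_le_card[of X "{}"] assms by simp
qed

end

section \<open>Rado's theorem for vector spaces\<close>

definition rado_condition :: "('k::field \<Rightarrow> 'v::ab_group_add \<Rightarrow> 'v) \<Rightarrow> 'i set \<Rightarrow> ('i \<Rightarrow> 'v set) \<Rightarrow> bool" where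
  "rado_condition scale I X \<longleftrightarrow>
     (\<forall>J \<subseteq> I. finite J \<longrightarrow> card J \<le> vector_space.dim scale (\<Union>(X ` J)))"

context vector_space
begin

lemma rado_conditionD: "rado_condition scale I X \<Longrightarrow> J \<subseteq> I \<Longrightarrow> finite J \<Longrightarrow> card J \<le> dim (\<Union>(X ` J))"
  by (simp add: rado_condition_def)

lemma rado_condition_nonempty:
  assumes "rado_condition scale I X" and "i \<in> I"
  shows "X i \<noteq> {}"
  using rado_conditionD[OF assms(1), of "{i}"] assms(2) nonzero_if_dim_pos[of "X i"] by auto

lemma rado_violation_contains:
  assumes "rado_condition scale I X" and "J \<subseteq> I" and "finite J"
    and "dim (\<Union>((X(j := Y)) ` J)) < card J"
  shows "j \<in> J"
proof (rule ccontr)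
  assume "j \<notin> J"
  then have "(X(j := Y)) ` J = X ` J"
    by force
  then show False
    using rado_conditionD[OF assms(1-3)] assms(4) by simp
qed

lemma dim_Union_Un_Int_le_removals:
  assumes fin: "\<And>i. i \<in> J1 \<union> J2 \<Longrightarrow> finite (X i)" and "finite J1" and "finite J2"
    and "j \<in> J1" and "j \<in> J2" and "x1 \<noteq> x2"
  shows "dim (\<Union>(X ` (J1 \<union> J2))) + dim (\<Union>(X ` (J1 \<inter> J2 - {j})))
    \<le> dim (\<Union>((X(j := X j - {x1})) ` J1)) + dim (\<Union>((X(j := X j - {x2})) ` J2))"
proof -
  define P where "P = \<Union>((X(j := X j - {x1})) ` J1)"
  define Q where "Q = \<Union>((X(j := X j - {x2})) ` J2)"
  have fin_PQ: "finite P" "finite Q"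
    using assms(1-3) unfolding P_def Q_def by auto
  have "\<Union>(X ` (J1 \<union> J2)) \<subseteq> P \<union> Q"
  proof
    fix y
    assume "y \<in> \<Union>(X ` (J1 \<union> J2))"
    then obtain i where "i \<in> J1 \<union> J2" "y \<in> X i"
      by blast
    then show "y \<in> P \<union> Q"
      using assms(4-6) unfolding P_def Q_def by (cases "i = j"; cases "y = x1") auto
  qed
  moreover have "\<Union>(X ` (J1 \<inter> J2 - {j})) \<subseteq> P \<inter> Q"
    unfolding P_def Q_def by auto
  ultimately have "dim (\<Union>(X ` (J1 \<union> J2))) \<le> dim (P \<union> Q)"
    "dim (\<Union>(X ` (J1 \<inter> J2 - {j}))) \<le> dim (P \<inter> Q)"
    using fin_PQ by (simp_all add: dim_subset_finite)
  then show ?thesis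
    using dim_Un_Int_le[OF fin_PQ] unfolding P_def Q_def by linarith
qed

text \<open>The key step of Hall's theorem, in matroid form: otherwise two violating families \<open>J1\<close>
  and \<open>J2\<close>, both containing \<open>j\<close>, would contradict the submodularity of \<open>dim\<close>.\<close>

lemma rado_condition_remove:
  assumes rado: "rado_condition scale I X" and fin: "\<And>i. i \<in> I \<Longrightarrow> finite (X i)" and "j \<in> I"
    and "x1 \<noteq> x2"
  shows "rado_condition scale I (X(j := X j - {x1})) \<or> rado_condition scale I (X(j := X j - {x2}))"
proof (rule ccontr)
  define X1 where "X1 = X(j := X j - {x1})"
  define X2 where "X2 = X(j := X j - {x2})"
  assume "\<not> ?thesis"
  then obtain J1 J2 where J1: "J1 \<subseteq> I" "finite J1" "dim (\<Union>(X1 ` J1)) < card J1"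
    and J2: "J2 \<subseteq> I" "finite J2" "dim (\<Union>(X2 ` J2)) < card J2"
    unfolding rado_condition_def X1_def X2_def by (auto simp: not_le)
  have "j \<in> J1"
    using J1(3) unfolding X1_def by (rule rado_violation_contains[OF rado J1(1,2)])
  have "j \<in> J2"
    using J2(3) unfolding X2_def by (rule rado_violation_contains[OF rado J2(1,2)])
  have "dim (\<Union>(X ` (J1 \<union> J2))) + dim (\<Union>(X ` (J1 \<inter> J2 - {j}))) \<le> dim (\<Union>(X1 ` J1)) + dim (\<Union>(X2 ` J2))"
    unfolding X1_def X2_def
    by (rule dim_Union_Un_Int_le_removals) (use fin J1 J2 \<open>j \<in> J1\<close> \<open>j \<in> J2\<close> \<open>x1 \<noteq> x2\<close> in auto)
  moreover have "card (J1 \<union> J2) \<le> dim (\<Union>(X ` (J1 \<union> J2)))"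
    by (rule rado_conditionD[OF rado]) (use J1 J2 in auto)
  moreover have "card (J1 \<inter> J2 - {j}) \<le> dim (\<Union>(X ` (J1 \<inter> J2 - {j})))"
    by (rule rado_conditionD[OF rado]) (use J1 J2 in auto)
  moreover have "card (J1 \<inter> J2) = Suc (card (J1 \<inter> J2 - {j}))"
    using card.remove[of "J1 \<inter> J2" j] J1(2) \<open>j \<in> J1\<close> \<open>j \<in> J2\<close> by simp
  moreover have "card (J1 \<union> J2) + card (J1 \<inter> J2) = card J1 + card J2"
    using card_Un_Int[OF J1(2) J2(2)] by simp
  ultimately show False
    using J1(3) J2(3) by linarith
qed

lemma rado_condition_singleton:
  assumes "rado_condition scale I X" and "\<And>i. i \<in> I \<Longrightarrow> finite (X i)" and "j \<in> I"
  shows "\<exists>y \<in> X j. rado_condition scale I (X(j := {y}))"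
  using assms
proof (induction "card (X j)" arbitrary: X rule: less_induct)
  case less
  show ?case
  proof (cases "card (X j) \<le> 1")
    case True
    have "0 < card (X j)"
      using rado_condition_nonempty[OF less.prems(1,3)] less.prems(2,3) card_gt_0_iff by blast
    with True have "card (X j) = 1"
      by linarith
    then obtain y where "X j = {y}"
      by (rule card_1_singletonE)
    then have "X(j := {y}) = X"
      by (rule fun_upd_idem)
    then show ?thesis
      using \<open>X j = {y}\<close> less.prems(1) by (intro bexI[of _ y]) simp_all
  next
    case False
    then obtain x1 x2 where "x1 \<in> X j" "x2 \<in> X j" "x1 \<noteq> x2"
      using card_le_Suc0_iff_eq[OF less.prems(2)[OF less.prems(3)]] by auto
    then obtain x where x: "x \<in> X j" "rado_condition scale I (X(j := X j - {x}))"
      using rado_condition_remove[OF less.prems, of x1 x2] by blast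
    define X' where "X' = X(j := X j - {x})"
    have "card (X' j) < card (X j)"
      unfolding X'_def fun_upd_same by (rule card_Diff1_less[OF less.prems(2)[OF less.prems(3)] x(1)])
    moreover have "\<And>i. i \<in> I \<Longrightarrow> finite (X' i)"
      unfolding X'_def using less.prems(2) by auto
    ultimately obtain y where "y \<in> X' j" "rado_condition scale I (X'(j := {y}))"
      using less.hyps x(2) less.prems(3) unfolding X'_def by blast
    then show ?thesis
      unfolding X'_def by (intro bexI[of _ y]) simp_all
  qed
qed

lemma inj_on_independent_if_card_le_dim:
  assumes "finite J" and "card J \<le> dim (x ` J)"
  shows "inj_on x J \<and> independent (x ` J)"
proof -
  have "dim (x ` J) \<le> card (x ` J)" "card (x ` J) \<le> card J"
    using assms(1) by (simp_all add: dim_le_card' card_image_le)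
  then have card: "card (x ` J) = card J" "dim (x ` J) = card (x ` J)"
    using assms(2) by linarith+
  obtain B where B: "B \<subseteq> x ` J" "independent B" "x ` J \<subseteq> span B" "card B = dim (x ` J)"
    using basis_exists .
  then have "B = x ` J"
    using card_subset_eq[OF finite_imageI[OF assms(1)] B(1)] card(2) by simp
  then show ?thesis
    using B(2) eq_card_imp_inj_on[OF assms(1) card(1)] by simp
qed

lemma inj_on_independent_if_finite_subsets:
  assumes "\<And>J. J \<subseteq> I \<Longrightarrow> finite J \<Longrightarrow> inj_on x J \<and> independent (x ` J)"
  shows "inj_on x I \<and> independent (x ` I)"
proof
  show "inj_on x I"
  proof (rule inj_onI)
    fix a b
    assume "a \<in> I" "b \<in> I" "x a = x b"
    then have "inj_on x {a, b}"
      using assms[of "{a, b}"] by simp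
    then show "a = b"
      using inj_onD \<open>x a = x b\<close> by fastforce
  qed
  have "independent S" if "S \<subseteq> x ` I" "finite S" for S
  proof -
    obtain J where "J \<subseteq> I" "finite J" "S = x ` J"
      using finite_subset_image[OF \<open>finite S\<close> \<open>S \<subseteq> x ` I\<close>] by blast
    then show ?thesis
      using assms by blast
  qed
  then show "independent (x ` I)"
    unfolding independent_explicit_finite_subsets using independentD by blast
qed

lemma rado_shrinking_sequence:
  fixes X :: "'i \<Rightarrow> 'b set"
  assumes "I \<noteq> {}" and rado: "rado_condition scale I X" and fin: "\<And>i. i \<in> I \<Longrightarrow> finite (X i)"
  obtains Y y where "\<And>n. rado_condition scale I (Y n)" and "\<And>n i. i \<in> I \<Longrightarrow> Y n i \<subseteq> X i"
    and "\<And>n. y n \<in> Y n (from_nat_into I n)"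
    and "\<And>n. Y (Suc n) = (Y n)(from_nat_into I n := {y n})"
proof -
  define e where "e = from_nat_into I"
  have e: "e n \<in> I" for n
    unfolding e_def using from_nat_into[OF \<open>I \<noteq> {}\<close>] .
  define P where "P n Z \<longleftrightarrow> rado_condition scale I Z \<and> (\<forall>i\<in>I. finite (Z i) \<and> Z i \<subseteq> X i)"
    for n :: nat and Z :: "'i \<Rightarrow> 'b set"
  define Q where "Q n Z Z' \<longleftrightarrow> (\<exists>y \<in> Z (e n). Z' = Z(e n := {y}))"
    for n :: nat and Z Z' :: "'i \<Rightarrow> 'b set"
  have "P 0 X"
    using rado fin unfolding P_def by blast
  moreover have "\<exists>Z'. P (Suc n) Z' \<and> Q n Z Z'" if PZ: "P n Z" for n Z
  proof -
    obtain y where "y \<in> Z (e n)" "rado_condition scale I (Z(e n := {y}))"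
      using rado_condition_singleton[of I Z "e n"] PZ e unfolding P_def by blast
    then show ?thesis
      using PZ unfolding P_def Q_def by (intro exI[of _ "Z(e n := {y})"]) auto
  qed
  ultimately obtain Y where Y: "\<And>n. P n (Y n) \<and> Q n (Y n) (Y (Suc n))"
    using dependent_nat_choice[of P Q] by blast
  then obtain y where y: "\<And>n. y n \<in> Y n (e n) \<and> Y (Suc n) = (Y n)(e n := {y n})"
    using choice[of "\<lambda>n y. y \<in> Y n (e n) \<and> Y (Suc n) = (Y n)(e n := {y})"] unfolding Q_def by blast
  show ?thesis
  proof (rule that)
    show "rado_condition scale I (Y n)" for n
      using Y[of n] unfolding P_def by blast
    show "Y n i \<subseteq> X i" if "i \<in> I" for n i
      using Y[of n] that unfolding P_def by blast
    show "y n \<in> Y n (from_nat_into I n)" "Y (Suc n) = (Y n)(from_nat_into I n := {y n})" for n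
      using y[of n] unfolding e_def by blast+
  qed
qed

lemma rado_eventually_singletons:
  fixes X :: "'i \<Rightarrow> 'b set"
  assumes "countable I" and rado: "rado_condition scale I X" and fin: "\<And>i. i \<in> I \<Longrightarrow> finite (X i)"
  obtains Y x where "\<And>n. rado_condition scale I (Y n)"
    and "\<And>i. i \<in> I \<Longrightarrow> x i \<in> X i" and "\<And>i n. i \<in> I \<Longrightarrow> to_nat_on I i < n \<Longrightarrow> Y n i = {x i}"
proof (cases "I = {}")
  case True
  then show ?thesis
    using that[of "\<lambda>_. X"] rado by blast
next
  case False
  obtain Y y where rado_Y: "\<And>n. rado_condition scale I (Y n)" and sub: "\<And>n i. i \<in> I \<Longrightarrow> Y n i \<subseteq> X i"
    and y: "\<And>n. y n \<in> Y n (from_nat_into I n)"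
    and step: "\<And>n. Y (Suc n) = (Y n)(from_nat_into I n := {y n})"
    using rado_shrinking_sequence[OF False rado fin] by blast
  have "Y (Suc n) i \<subseteq> Y n i" for n i
    using y[of n] step[of n] by auto
  then have shrink: "Y n i \<subseteq> Y m i" if "m \<le> n" for i m n
    using lift_Suc_antimono_le[of "\<lambda>n. Y n i"] that by blast
  define x where "x i = y (to_nat_on I i)" for i
  have frozen: "Y n i = {x i}" if "i \<in> I" "to_nat_on I i < n" for i n
  proof -
    have "from_nat_into I (to_nat_on I i) = i"
      using \<open>countable I\<close> that(1) by simp
    then have "Y (Suc (to_nat_on I i)) i = {x i}"
      using step[of "to_nat_on I i"] unfolding x_def by simp
    then have "Y n i \<subseteq> {x i}"
      using shrink[of "Suc (to_nat_on I i)" n i] that(2) by simp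
    moreover have "Y n i \<noteq> {}"
      using rado_condition_nonempty[OF rado_Y that(1)] .
    ultimately show ?thesis
      by (simp add: subset_singleton_iff)
  qed
  have "x i \<in> X i" if "i \<in> I" for i
    using frozen[OF that lessI] sub[OF that, of "Suc (to_nat_on I i)"] by simp
  with rado_Y frozen that show ?thesis
    by blast
qed

theorem rado_transversal:
  assumes "countable I" and "rado_condition scale I X" and "\<And>i. i \<in> I \<Longrightarrow> finite (X i)"
  obtains x where "\<And>i. i \<in> I \<Longrightarrow> x i \<in> X i" and "inj_on x I" and "independent (x ` I)"
proof -
  obtain Y x where rado: "\<And>n. rado_condition scale I (Y n)" and x: "\<And>i. i \<in> I \<Longrightarrow> x i \<in> X i"
    and frozen: "\<And>i n. i \<in> I \<Longrightarrow> to_nat_on I i < n \<Longrightarrow> Y n i = {x i}"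
    using rado_eventually_singletons[OF assms] by blast
  have "inj_on x J \<and> independent (x ` J)" if "J \<subseteq> I" "finite J" for J
  proof -
    define N where "N = Suc (Max (insert 0 (to_nat_on I ` J)))"
    have "Y N i = {x i}" if "i \<in> J" for i
    proof (rule frozen)
      show "i \<in> I"
        using \<open>J \<subseteq> I\<close> that by blast
      have "to_nat_on I i \<le> Max (insert 0 (to_nat_on I ` J))"
        using \<open>finite J\<close> that by (intro Max_ge) auto
      then show "to_nat_on I i < N"
        unfolding N_def by simp
    qed
    then have "\<Union>(Y N ` J) = (\<Union>i\<in>J. {x i})"
      by (intro SUP_cong) auto
    then have "\<Union>(Y N ` J) = x ` J"
      by (simp add: UNION_singleton_eq_range)
    then have "card J \<le> dim (x ` J)"
      using rado_conditionD[OF rado[of N] that] by simp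
    then show ?thesis
      by (rule inj_on_independent_if_card_le_dim[OF \<open>finite J\<close>])
  qed
  then have "inj_on x I \<and> independent (x ` I)"
    by (rule inj_on_independent_if_finite_subsets)
  then show ?thesis
    using x that by blast
qed

end

section \<open>Monomials in an associative algebra\<close>

primrec monomials :: "'a::semigroup_mult set \<Rightarrow> nat \<Rightarrow> 'a set" where
  "monomials G 0 = {}"
| "monomials G (Suc n) = G \<union> monomials G n * G"

lemma finite_monomials: "finite G \<Longrightarrow> finite (monomials G n)"
  by (induction n) (simp_all add: finite_set_times)

lemma monomials_subset_Suc: "monomials G n \<subseteq> monomials G (Suc n)"
proof (induction n)
  case (Suc n)
  then show ?case
    using set_times_mono2[OF Suc order_refl[of G]] by auto
qed simp

lemma monomials_mono: "m \<le> n \<Longrightarrow> monomials G m \<subseteq> monomials G n"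
  using lift_Suc_mono_le[of "monomials G"] monomials_subset_Suc by blast

lemma generators_subset_monomials: "0 < n \<Longrightarrow> G \<subseteq> monomials G n"
  by (cases n) auto

lemma monomials_times: "monomials G m * monomials G n \<subseteq> monomials G (m + n)"
proof (induction n)
  case (Suc n)
  have "monomials G m * G \<subseteq> monomials G (m + Suc n)"
    using monomials_mono[of "Suc m" "m + Suc n" G] by auto
  moreover have "monomials G m * (monomials G n * G) \<subseteq> monomials G (m + n) * G"
    using set_times_mono2[OF Suc order_refl] by (simp add: mult.assoc)
  then have "monomials G m * (monomials G n * G) \<subseteq> monomials G (m + Suc n)"
    by auto
  ultimately show ?case
    by (simp add: set_times_Un_distrib)
qed (simp add: set_times_def)

lemma funpow_expansion_subset: "((\<lambda>Y. Y \<union> Y * T) ^^ j) X \<subseteq> X \<union> X * monomials T j"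
proof (induction j)
  case (Suc j)
  have "X * monomials T j * T \<subseteq> X * monomials T (Suc j)"
    unfolding mult.assoc by (intro set_times_mono2) auto
  moreover have "X * T \<subseteq> X * monomials T (Suc j)"
    by (intro set_times_mono2) auto
  moreover have "X * monomials T j \<subseteq> X * monomials T (Suc j)"
    using monomials_subset_Suc by (intro set_times_mono2) auto
  moreover have "((\<lambda>Y. Y \<union> Y * T) ^^ Suc j) X \<subseteq> (X \<union> X * monomials T j) \<union> (X \<union> X * monomials T j) * T"
    using Suc set_times_mono2[OF Suc order_refl] by auto
  ultimately show ?case
    by (auto simp: set_times_Un_distrib)
qed simp

locale assoc_algebra = vector_space scale
  for scale :: "'k::field \<Rightarrow> 'r::ring \<Rightarrow> 'r" +
  assumes scale_mult_left: "scale a (x * y) = scale a x * y"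
    and scale_mult_right: "scale a (x * y) = x * scale a y"
begin

lemma module_hom_mult_left: "module_hom scale scale (\<lambda>x. w * x)"
  unfolding module_hom_iff using module_axioms by (simp add: distrib_left scale_mult_right)

lemma module_hom_mult_right: "module_hom scale scale (\<lambda>x. x * t)"
  unfolding module_hom_iff using module_axioms by (simp add: distrib_right scale_mult_left)

lemma span_times_span: "span A * span B \<subseteq> span (A * B)"
proof
  fix z
  assume "z \<in> span A * span B"
  then obtain x y where xy: "x \<in> span A" "y \<in> span B" "z = x * y"
    by (auto elim: set_times_elim)
  have "x * b \<in> span (A * B)" if "b \<in> B" for b
  proof -
    have "x * b \<in> span ((\<lambda>a. a * b) ` A)"
      using module_hom.span_image[OF module_hom_mult_right] xy(1) by blast
    moreover have "(\<lambda>a. a * b) ` A \<subseteq> A * B"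
      using that by auto
    ultimately show ?thesis
      using span_mono by blast
  qed
  then have "span ((\<lambda>b. x * b) ` B) \<subseteq> span (A * B)"
    using span_minimal[OF _ subspace_span] by blast
  moreover have "x * y \<in> span ((\<lambda>b. x * b) ` B)"
    using module_hom.span_image[OF module_hom_mult_left] xy(2) by blast
  ultimately show "z \<in> span (A * B)"
    using xy(3) by blast
qed

lemma subalgebra_span_monomials: "subalgebra scale (\<Union>n. span (monomials G n))"
  (is "subalgebra scale ?S")
proof -
  have common: "\<exists>n. x \<in> span (monomials G n) \<and> y \<in> span (monomials G n)"
    if xy: "x \<in> ?S" "y \<in> ?S" for x y
  proof -
    obtain a b where "x \<in> span (monomials G a)" "y \<in> span (monomials G b)"
      using xy by blast
    then have "x \<in> span (monomials G (max a b))" "y \<in> span (monomials G (max a b))"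
      using span_mono[OF monomials_mono[of a "max a b" G]] span_mono[OF monomials_mono[of b "max a b" G]]
      by auto
    then show ?thesis
      by blast
  qed
  have "subspace ?S"
  proof (rule subspaceI)
    show "0 \<in> ?S"
      using span_zero by blast
    show "x + y \<in> ?S" if "x \<in> ?S" "y \<in> ?S" for x y
      using common[OF that] span_add by blast
    show "scale c x \<in> ?S" if "x \<in> ?S" for c x
      using that span_scale by blast
  qed
  moreover have "x * y \<in> ?S" if xy: "x \<in> ?S" "y \<in> ?S" for x y
  proof -
    obtain n where "x \<in> span (monomials G n)" "y \<in> span (monomials G n)"
      using common[OF xy] by blast
    then have "x * y \<in> span (monomials G (n + n))"
      using span_times_span span_mono[OF monomials_times] by blast
    then show ?thesis
      by blast
  qed
  ultimately show ?thesis
    unfolding subalgebra_def by blast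
qed

lemma finite_spanning_if_injective_mult_left:
  assumes "finite X" and into: "\<And>r. w * r \<in> span X" and inj: "\<And>r. w * r = 0 \<Longrightarrow> r = 0"
  shows "\<exists>B. finite B \<and> span B = UNIV"
proof -
  obtain B where B: "independent B" "UNIV \<subseteq> span B"
    using basis_exists[of UNIV] by metis
  have "inj (\<lambda>r. w * r)"
    using module_hom.inj_iff_eq_0[OF module_hom_mult_left] inj by blast
  then have "independent ((\<lambda>r. w * r) ` B)"
    using module_hom.independent_injective_image[OF module_hom_mult_left B(1)] by (simp add: inj_on_subset)
  then have "finite ((\<lambda>r. w * r) ` B)"
    using independent_span_bound[OF \<open>finite X\<close>] into by blast
  then have "finite B"
    using \<open>inj (\<lambda>r. w * r)\<close> finite_imageD inj_on_subset by blast
  with B(2) show ?thesis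
    by blast
qed

end

section \<open>Folner sets and amenability\<close>

definition translation_ratio :: "('k::field \<Rightarrow> 'r::ring \<Rightarrow> 'r) \<Rightarrow> 'r set \<Rightarrow> 'r \<Rightarrow> real" where
  "translation_ratio scale W r =
     real (vector_space.dim scale {x + y | x y. x \<in> right_mult_set W r \<and> y \<in> W})
     / real (vector_space.dim scale W)"

lemma amenable_iff_translation_ratio:
  fixes scale :: "'k::field \<Rightarrow> 'r::ring \<Rightarrow> 'r"
  shows "amenable scale \<longleftrightarrow>
    (\<exists>W :: nat \<Rightarrow> 'r set.
      (\<forall>n. module.subspace scale (W n) \<and> (\<exists>B. finite B \<and> module.span scale B = W n)) \<and>
      (\<forall>n. W n \<subseteq> W (Suc n)) \<and> (\<Union>n. W n) = UNIV \<and>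
      (\<forall>r. (\<lambda>n. translation_ratio scale (W n) r) \<longlonglongrightarrow> 1))"
  unfolding amenable_def translation_ratio_def ..

context assoc_algebra
begin

lemma dim_translate_sum_bounds:
  assumes "finite B" and "finite T" and "r \<in> span T"
  defines "N \<equiv> {x + y | x y. x \<in> right_mult_set (span B) r \<and> y \<in> span B}"
  shows "dim B \<le> dim N" and "dim N \<le> dim (B \<union> B * T)"
proof -
  have fin: "finite (B \<union> B * T)"
    using assms(1,2) by (simp add: finite_set_times)
  have "N \<subseteq> span (B \<union> B * T)"
  proof
    fix z
    assume "z \<in> N"
    then obtain w y where wy: "w \<in> span B" "y \<in> span B" "z = w * r + y"
      unfolding N_def right_mult_set_def by blast
    have "w * r \<in> span (B * T)"
      using span_times_span wy(1) assms(3) by blast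
    then have "w * r \<in> span (B \<union> B * T)"
      using span_mono[of "B * T" "B \<union> B * T"] by blast
    moreover have "y \<in> span (B \<union> B * T)"
      using wy(2) span_mono[of B "B \<union> B * T"] by blast
    ultimately show "z \<in> span (B \<union> B * T)"
      using wy(3) span_add by simp
  qed
  then show "dim N \<le> dim (B \<union> B * T)"
    using dim_mono_finite fin by blast
  have "span B \<subseteq> N"
  proof
    fix y
    assume "y \<in> span B"
    moreover have "0 \<in> right_mult_set (span B) r"
      unfolding right_mult_set_def using span_zero by force
    ultimately show "y \<in> N"
      unfolding N_def by force
  qed
  then have "dim (span B) \<le> dim N"
    using dim_mono_bounded[OF _ \<open>N \<subseteq> span (B \<union> B * T)\<close> fin] span_superset by blast
  then show "dim B \<le> dim N"
    by simp
qed

lemma translation_ratio_bounds: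
  assumes "finite B" and "finite T" and "r \<in> span T" and "0 < dim B"
  shows "1 \<le> translation_ratio scale (span B) r"
    and "translation_ratio scale (span B) r \<le> dim (B \<union> B * T) / dim B"
  using dim_translate_sum_bounds[OF assms(1-3)] assms(4)
  unfolding translation_ratio_def dim_span by (simp_all add: divide_right_mono)

lemma dim_expansion_Un_le:
  assumes "finite X" and "finite U" and "finite T"
  shows "dim ((X \<union> U) \<union> (X \<union> U) * T) \<le> dim (X \<union> X * T) + dim (U \<union> U * T)"
proof -
  have "(X \<union> U) \<union> (X \<union> U) * T = (X \<union> X * T) \<union> (U \<union> U * T)"
    by (auto simp: set_times_Un_distrib)
  moreover have "finite (X \<union> X * T)" "finite (U \<union> U * T)"
    using assms by (simp_all add: finite_set_times)
  ultimately show ?thesis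
    using dim_Un_le by presburger
qed

lemma dim_expansion_Un_folner_le:
  fixes \<epsilon> :: real
  assumes "finite X" and "finite U" and "finite T"
    and grow: "dim X < dim (X \<union> X * T)"
    and small: "dim (X \<union> X * T) < (1 + \<epsilon>) * dim X"
  shows "dim ((X \<union> U) \<union> (X \<union> U) * T) \<le> (1 + \<epsilon> * (1 + real (dim (U \<union> U * T)))) * dim (X \<union> U)"
proof -
  define x where "x = real (dim X)"
  define e where "e = real (dim (X \<union> X * T))"
  define c where "c = real (dim (U \<union> U * T))"
  define d where "d = real (dim (X \<union> U))"
  have s: "dim ((X \<union> U) \<union> (X \<union> U) * T) \<le> e + c"
    unfolding e_def c_def using dim_expansion_Un_le[OF assms(1-3)]
    by (simp only: of_nat_add[symmetric] of_nat_le_iff)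
  have "x \<le> d" "0 \<le> x" "0 \<le> c"
    unfolding x_def d_def c_def using dim_subset_finite assms(1,2) by simp_all
  have "x + 1 \<le> e" "e < x + \<epsilon> * x"
    using grow small unfolding x_def e_def by (simp_all add: algebra_simps)
  then have "1 < \<epsilon> * x"
    by linarith
  then have "\<epsilon> * x \<le> \<epsilon> * d"
    using \<open>x \<le> d\<close> \<open>0 \<le> x\<close> zero_less_mult_iff[of \<epsilon> x] by (intro mult_left_mono) auto
  then have "c * 1 \<le> c * (\<epsilon> * d)"
    using \<open>1 < \<epsilon> * x\<close> \<open>0 \<le> c\<close> by (intro mult_left_mono) simp_all
  moreover have "(1 + \<epsilon> * (1 + c)) * d = d + \<epsilon> * d + c * (\<epsilon> * d)"
    by (simp add: algebra_simps)
  ultimately show ?thesis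
    using s \<open>x \<le> d\<close> \<open>e < x + \<epsilon> * x\<close> \<open>\<epsilon> * x \<le> \<epsilon> * d\<close> unfolding c_def d_def by linarith
qed

lemma folner_superset:
  fixes \<delta> :: real
  assumes "finite T" and "finite U" and "0 < \<delta>"
    and folner: "\<And>\<epsilon>::real. 0 < \<epsilon> \<Longrightarrow> \<exists>X. finite X \<and> 0 < dim X \<and> dim (X \<union> X * T) < (1 + \<epsilon>) * dim X"
    and grow: "\<And>X. finite X \<Longrightarrow> 0 < dim X \<Longrightarrow> dim X < dim (X \<union> X * T)"
  obtains C where "U \<subseteq> C" and "finite C" and "0 < dim C" and "dim (C \<union> C * T) \<le> (1 + \<delta>) * dim C"
proof -
  define c where "c = real (dim (U \<union> U * T))"
  have "0 < \<delta> / (1 + c)"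
    using \<open>0 < \<delta>\<close> unfolding c_def by simp
  then obtain X where X: "finite X" "0 < dim X" "dim (X \<union> X * T) < (1 + \<delta> / (1 + c)) * dim X"
    using folner by blast
  have "dim (X \<union> U \<union> (X \<union> U) * T) \<le> (1 + \<delta> / (1 + c) * (1 + c)) * dim (X \<union> U)"
    using dim_expansion_Un_folner_le[OF X(1) assms(2,1) grow[OF X(1,2)] X(3)] unfolding c_def .
  moreover have "\<delta> / (1 + c) * (1 + c) = \<delta>"
    unfolding c_def by (simp add: add_pos_nonneg)
  moreover have "0 < dim (X \<union> U)"
    using X(1,2) assms(2) dim_subset_finite[of X "X \<union> U"] by simp
  ultimately show ?thesis
    using that[of "X \<union> U"] X(1) assms(2) by simp
qed

lemma amenable_if_finite_dimensional:
  fixes z :: 'r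
  assumes "finite B" and "span B = UNIV" and "z \<noteq> 0"
  shows "amenable scale"
proof -
  have sum_UNIV: "{x + y | x y. x \<in> right_mult_set UNIV r \<and> y \<in> UNIV} = UNIV" for r :: 'r
  proof -
    have "w = 0 * r + w \<and> 0 * r \<in> right_mult_set UNIV r" for w
      unfolding right_mult_set_def using rangeI[of "\<lambda>a. a * r" 0] by simp
    then show ?thesis
      by blast
  qed
  have "dim {z} \<le> dim (UNIV :: 'r set)"
    using dim_mono_bounded[of "{z}" UNIV B] assms(1,2) by simp
  then have "0 < dim (UNIV :: 'r set)"
    using dim_eq_card_independent[of "{z}"] \<open>z \<noteq> 0\<close> by simp
  then have "translation_ratio scale UNIV r = 1" for r
    unfolding translation_ratio_def sum_UNIV by simp
  then show ?thesis
    unfolding amenable_iff_translation_ratio using assms(1,2) subspace_UNIV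
    by (intro exI[of _ "\<lambda>_. UNIV"]) auto
qed

end

locale finitely_generated_algebra = assoc_algebra scale
  for scale :: "'k::field \<Rightarrow> 'r::ring \<Rightarrow> 'r" +
  fixes G :: "'r set"
  assumes finite_generators: "finite G"
    and generates: "\<And>S. subalgebra scale S \<Longrightarrow> G \<subseteq> S \<Longrightarrow> S = UNIV"
begin

lemma in_span_monomials: "\<exists>n. r \<in> span (monomials G n)"
proof -
  define S where "S = (\<Union>n. span (monomials G n))"
  have "subalgebra scale S"
    unfolding S_def by (rule subalgebra_span_monomials)
  moreover have "G \<subseteq> S"
  proof
    fix g
    assume "g \<in> G"
    then have "g \<in> span (monomials G 1)"
      using span_base by simp
    then show "g \<in> S"
      unfolding S_def by blast
  qed
  ultimately have "S = UNIV"
    by (rule generates)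
  then show ?thesis
    unfolding S_def by blast
qed

lemma eventually_in_span_monomials: "\<forall>\<^sub>F n in sequentially. r \<in> span (monomials G n)"
proof -
  obtain k where "r \<in> span (monomials G k)"
    using in_span_monomials by blast
  then have "r \<in> span (monomials G n)" if "k \<le> n" for n
    using span_mono[OF monomials_mono[OF that]] by blast
  then show ?thesis
    unfolding eventually_sequentially by blast
qed

lemma countable_if_independent:
  assumes "independent F"
  shows "countable F"
proof -
  have "finite (F \<inter> span (monomials G n))" for n
    using independent_span_bound[OF finite_monomials[OF finite_generators]]
      independent_mono[OF assms] by blast
  moreover have "F = (\<Union>n. F \<inter> span (monomials G n))"
    using in_span_monomials by blast
  ultimately show ?thesis
    by (metis countable_UN countable_finite countableI_type)
qed

lemma subspace_mult_closed:
  assumes "subspace V" and "V * G \<subseteq> V" and "v \<in> V"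
  shows "v * r \<in> V"
proof -
  define Q where "Q = {r. \<forall>v\<in>V. v * r \<in> V}"
  have "subspace Q"
  proof (rule subspaceI)
    show "0 \<in> Q"
      unfolding Q_def using subspace_0[OF assms(1)] by simp
    show "x + y \<in> Q" if "x \<in> Q" "y \<in> Q" for x y
      using that subspace_add[OF assms(1)] unfolding Q_def by (simp add: distrib_left)
    show "scale c x \<in> Q" if "x \<in> Q" for c x
    proof -
      have "scale c (v * x) \<in> V" if "v \<in> V" for v
        using \<open>x \<in> Q\<close> that subspace_scale[OF assms(1)] unfolding Q_def by blast
      then show ?thesis
        unfolding Q_def scale_mult_right by blast
    qed
  qed
  moreover have "x * y \<in> Q" if "x \<in> Q" "y \<in> Q" for x y
    using that unfolding Q_def by (simp add: mult.assoc[symmetric])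
  ultimately have "subalgebra scale Q"
    unfolding subalgebra_def by blast
  moreover have "G \<subseteq> Q"
    using assms(2) unfolding Q_def by (auto intro: set_times_intro)
  ultimately have "Q = UNIV"
    by (rule generates)
  then show ?thesis
    using assms(3) unfolding Q_def by blast
qed

text \<open>Otherwise \<open>span X\<close> would be a right ideal, and left multiplication by a nonzero element
  of \<open>X\<close> would embed the whole algebra into it.\<close>

lemma dim_less_dim_expansion:
  assumes no_zero_divisors: "\<And>x y::'r. x * y = 0 \<Longrightarrow> x = 0 \<or> y = 0"
    and infinite_dim: "\<nexists>B. finite B \<and> span B = UNIV"
    and "G \<subseteq> T" and "finite X" and "finite T" and "0 < dim X"
  shows "dim X < dim (X \<union> X * T)"
proof -
  have "\<not> X * T \<subseteq> span X"
  proof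
    assume "X * T \<subseteq> span X"
    have "span X * G \<subseteq> span X * span T"
      using \<open>G \<subseteq> T\<close> span_superset by (intro set_times_mono2) auto
    also have "\<dots> \<subseteq> span (X * T)"
      by (rule span_times_span)
    also have "\<dots> \<subseteq> span X"
      using \<open>X * T \<subseteq> span X\<close> span_minimal[OF _ subspace_span] by blast
    finally have "span X * G \<subseteq> span X" .
    obtain w where "w \<in> X" "w \<noteq> 0"
      using nonzero_if_dim_pos[OF \<open>0 < dim X\<close>] by blast
    then have "w * r \<in> span X" for r
      using subspace_mult_closed[OF subspace_span \<open>span X * G \<subseteq> span X\<close>] span_base by blast
    moreover have "w * r = 0 \<Longrightarrow> r = 0" for r
      using no_zero_divisors \<open>w \<noteq> 0\<close> by blast
    ultimately show False
      using finite_spanning_if_injective_mult_left[OF \<open>finite X\<close>] infinite_dim by blast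
  qed
  then obtain y where "y \<in> X * T" "y \<notin> span X"
    by blast
  then have "dim (insert y X) \<le> dim (X \<union> X * T)"
    using assms(4,5) by (intro dim_subset_finite) (auto simp: finite_set_times)
  then show ?thesis
    using dim_insert_finite[OF \<open>finite X\<close> \<open>y \<notin> span X\<close>] by simp
qed

lemma translation_ratio_tendsto_1:
  assumes fin: "\<And>n. finite (B n)" and pos: "\<And>n. 0 < dim (B n)"
    and almost_invariant:
      "\<And>n. dim (B n \<union> B n * monomials G (Suc n)) \<le> (1 + inverse (real (Suc n))) * dim (B n)"
  shows "(\<lambda>n. translation_ratio scale (span (B n)) r) \<longlonglongrightarrow> 1"
proof (rule tendsto_sandwich[OF _ _ tendsto_const LIMSEQ_inverse_real_of_nat_add])
  have "\<forall>\<^sub>F n in sequentially. r \<in> span (monomials G (Suc n))"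
    unfolding eventually_sequentially_Suc[of "\<lambda>n. r \<in> span (monomials G n)"]
    by (rule eventually_in_span_monomials)
  then have "\<forall>\<^sub>F n in sequentially. 1 \<le> translation_ratio scale (span (B n)) r \<and>
      translation_ratio scale (span (B n)) r \<le> 1 + inverse (real (Suc n))"
  proof eventually_elim
    case (elim n)
    note bounds = translation_ratio_bounds[OF fin finite_monomials[OF finite_generators] elim pos[of n]]
    have "dim (B n \<union> B n * monomials G (Suc n)) / dim (B n) \<le> 1 + inverse (real (Suc n))"
      using almost_invariant[of n] pos[of n] by (simp add: divide_le_eq)
    then show ?case
      using bounds by linarith
  qed
  then show "\<forall>\<^sub>F n in sequentially. 1 \<le> translation_ratio scale (span (B n)) r"
    "\<forall>\<^sub>F n in sequentially. translation_ratio scale (span (B n)) r \<le> 1 + inverse (real (Suc n))"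
    by (auto elim: eventually_mono)
qed

lemma amenable_if_almost_invariant_sequence:
  assumes fin: "\<And>n. finite (B n)" and mono: "\<And>n. B n \<subseteq> B (Suc n)"
    and exhaust: "\<And>n. monomials G (Suc n) \<subseteq> B n" and pos: "\<And>n. 0 < dim (B n)"
    and almost_invariant:
      "\<And>n. dim (B n \<union> B n * monomials G (Suc n)) \<le> (1 + inverse (real (Suc n))) * dim (B n)"
  shows "amenable scale"
proof -
  have "(\<Union>n. span (B n)) = UNIV"
  proof -
    have "r \<in> (\<Union>n. span (B n))" for r
    proof -
      obtain n where "r \<in> span (monomials G n)"
        using in_span_monomials by blast
      then have "r \<in> span (monomials G (Suc n))"
        using span_mono[OF monomials_subset_Suc] by blast
      then show ?thesis
        using span_mono[OF exhaust[of n]] by blast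
    qed
    then show ?thesis
      by blast
  qed
  moreover have "\<forall>n. subspace (span (B n)) \<and> (\<exists>B'. finite B' \<and> span B' = span (B n))"
    using fin subspace_span by blast
  moreover have "\<forall>n. span (B n) \<subseteq> span (B (Suc n))"
    using mono span_mono by blast
  ultimately show ?thesis
    unfolding amenable_iff_translation_ratio
    using translation_ratio_tendsto_1[OF fin pos almost_invariant]
    by (intro exI[of _ "\<lambda>n. span (B n)"] conjI) simp_all
qed

lemma almost_invariant_superset:
  assumes no_zero_divisors: "\<And>x y::'r. x * y = 0 \<Longrightarrow> x = 0 \<or> y = 0"
    and infinite_dim: "\<nexists>B. finite B \<and> span B = UNIV"
    and folner: "\<And>(\<epsilon>::real). 0 < \<epsilon> \<Longrightarrow>
      \<exists>X. finite X \<and> 0 < dim X \<and> dim (X \<union> X * monomials G (Suc n)) < (1 + \<epsilon>) * dim X"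
    and "finite U"
  obtains C where "U \<union> monomials G (Suc n) \<subseteq> C" and "finite C" and "0 < dim C"
    and "dim (C \<union> C * monomials G (Suc n)) \<le> (1 + inverse (real (Suc n))) * dim C"
proof (rule folner_superset)
  have T: "finite (monomials G (Suc n))" "G \<subseteq> monomials G (Suc n)"
    using finite_monomials[OF finite_generators] generators_subset_monomials[of "Suc n"] by blast+
  then show "finite (monomials G (Suc n))" "finite (U \<union> monomials G (Suc n))"
    using \<open>finite U\<close> by blast+
  show "dim X < dim (X \<union> X * monomials G (Suc n))" if "finite X" "0 < dim X" for X
    using dim_less_dim_expansion[OF no_zero_divisors infinite_dim T(2) that(1) T(1) that(2)] .
qed (use folner that in auto)

lemma amenable_if_folner:
  assumes no_zero_divisors: "\<And>x y::'r. x * y = 0 \<Longrightarrow> x = 0 \<or> y = 0"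
    and infinite_dim: "\<nexists>B. finite B \<and> span B = UNIV"
    and folner: "\<And>n (\<epsilon>::real). 0 < \<epsilon> \<Longrightarrow>
      \<exists>X. finite X \<and> 0 < dim X \<and> dim (X \<union> X * monomials G n) < (1 + \<epsilon>) * dim X"
  shows "amenable scale"
proof -
  define P where "P n C \<longleftrightarrow> finite C \<and> monomials G (Suc n) \<subseteq> C \<and> 0 < dim C \<and>
      dim (C \<union> C * monomials G (Suc n)) \<le> (1 + inverse (real (Suc n))) * dim C" for n C
  have extend: "\<exists>C. U \<subseteq> C \<and> P n C" if "finite U" for n U
  proof -
    obtain C where "U \<union> monomials G (Suc n) \<subseteq> C" "finite C" "0 < dim C"
      "dim (C \<union> C * monomials G (Suc n)) \<le> (1 + inverse (real (Suc n))) * dim C"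
      using almost_invariant_superset[OF no_zero_divisors infinite_dim folner \<open>finite U\<close>] by blast
    then have "U \<subseteq> C \<and> P n C"
      unfolding P_def by auto
    then show ?thesis
      by blast
  qed
  have "\<exists>C'. P (Suc n) C' \<and> C \<subseteq> C'" if "P n C" for n C
  proof -
    have "finite C"
      using that unfolding P_def by blast
    then show ?thesis
      using extend by blast
  qed
  moreover have "\<exists>C. P 0 C"
    using extend[of "{}"] by blast
  ultimately obtain B where B: "\<And>n. P n (B n) \<and> B n \<subseteq> B (Suc n)"
    using dependent_nat_choice[of P "\<lambda>_ C C'. C \<subseteq> C'"] by blast
  show ?thesis
  proof (rule amenable_if_almost_invariant_sequence)
    fix n
    show "finite (B n)" "monomials G (Suc n) \<subseteq> B n" "0 < dim (B n)"
      "dim (B n \<union> B n * monomials G (Suc n)) \<le> (1 + inverse (real (Suc n))) * dim (B n)"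
      using B[of n] unfolding P_def by auto
    show "B n \<subseteq> B (Suc n)"
      using B by blast
  qed
qed

end

section \<open>Doubling sets and paradoxical decompositions\<close>

definition doubling :: "('k::field \<Rightarrow> 'r::ring \<Rightarrow> 'r) \<Rightarrow> 'r set \<Rightarrow> bool" where
  "doubling scale S \<longleftrightarrow> (\<forall>A. finite A \<longrightarrow> module.independent scale A \<longrightarrow>
     2 * card A \<le> vector_space.dim scale (A * S))"

definition paradoxical_decomposition :: "('k::field \<Rightarrow> 'r::ring \<Rightarrow> 'r) \<Rightarrow> 'r set \<Rightarrow> bool" where
  "paradoxical_decomposition scale F \<longleftrightarrow>
     (\<exists>(m::nat) (A :: nat \<Rightarrow> 'r set) (g :: nat \<Rightarrow> 'r) (h :: nat \<Rightarrow> 'r).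
        F = (\<Union>i<m. A i) \<and>
        (\<forall>i<m. \<forall>j<m. i \<noteq> j \<longrightarrow> A i \<inter> A j = {}) \<and>
        (\<forall>i<m. g i \<noteq> 0 \<and> h i \<noteq> 0) \<and>
        mutually_independent scale ({..<m} \<times> UNIV)
          (\<lambda>(i, b). if b then right_mult_set (A i) (g i) else right_mult_set (A i) (h i)))"

lemma paradoxical_iff_decompositions:
  "paradoxical scale \<longleftrightarrow>
     (\<forall>F. module.independent scale F \<and> module.span scale F = UNIV \<longrightarrow> paradoxical_decomposition scale F)"
  unfolding paradoxical_def paradoxical_decomposition_def ..

context assoc_algebra
begin

lemma dim_funpow_expansion:
  fixes \<epsilon> :: real
  assumes "finite T" and "0 < \<epsilon>" and "finite X"
    and expand: "\<And>X. finite X \<Longrightarrow> 0 < dim X \<Longrightarrow> (1 + \<epsilon>) * dim X \<le> dim (X \<union> X * T)"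
  shows "(1 + \<epsilon>) ^ j * dim X \<le> dim (((\<lambda>Y. Y \<union> Y * T) ^^ j) X)"
proof (induction j)
  case (Suc j)
  define Y where "Y = ((\<lambda>Y. Y \<union> Y * T) ^^ j) X"
  have "finite Y"
    unfolding Y_def by (induction j) (simp_all add: assms(1,3) finite_set_times)
  then have "(1 + \<epsilon>) * dim Y \<le> dim (Y \<union> Y * T)"
    using expand by (cases "dim Y = 0") simp_all
  moreover have "(1 + \<epsilon>) * ((1 + \<epsilon>) ^ j * dim X) \<le> (1 + \<epsilon>) * dim Y"
    using Suc \<open>0 < \<epsilon>\<close> unfolding Y_def by (intro mult_left_mono) simp_all
  ultimately show ?case
    unfolding Y_def by simp
qed simp

lemma doubling_if_expanding:
  fixes \<epsilon> :: real
  assumes "finite T" and "0 < \<epsilon>"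
    and expand: "\<And>X. finite X \<Longrightarrow> 0 < dim X \<Longrightarrow> (1 + \<epsilon>) * dim X \<le> dim (X \<union> X * T)"
  obtains S where "finite S" and "0 \<notin> S" and "doubling scale S"
proof -
  obtain j where j: "3 < (1 + \<epsilon>) ^ j"
    using real_arch_pow[of "1 + \<epsilon>" 3] \<open>0 < \<epsilon>\<close> by auto
  define M where "M = monomials T j"
  have "finite M"
    unfolding M_def using finite_monomials[OF \<open>finite T\<close>] .
  have "2 * card A \<le> dim (A * (M - {0}))" if "finite A" "independent A" for A
  proof -
    have dim_A: "dim A = card A"
      using dim_eq_card_independent[OF \<open>independent A\<close>] .
    have fin: "finite (A * M)"
      using \<open>finite A\<close> \<open>finite M\<close> by (simp add: finite_set_times)
    have "3 * real (card A) \<le> (1 + \<epsilon>) ^ j * dim A"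
      unfolding dim_A using mult_right_mono[OF less_imp_le[OF j], of "real (card A)"] by simp
    also have "\<dots> \<le> dim (((\<lambda>Y. Y \<union> Y * T) ^^ j) A)"
      using dim_funpow_expansion[OF \<open>finite T\<close> \<open>0 < \<epsilon>\<close> \<open>finite A\<close> expand] .
    also have "\<dots> \<le> dim (A \<union> A * M)"
      using dim_subset_finite[OF funpow_expansion_subset] \<open>finite A\<close> fin unfolding M_def by simp
    also have "\<dots> \<le> card A + dim (A * M)"
      using dim_Un_le[OF \<open>finite A\<close> fin] dim_A by simp
    finally have "2 * card A \<le> dim (A * M)"
      by linarith
    moreover have "A * M \<subseteq> insert 0 (A * (M - {0}))"
      by (auto elim!: set_times_elim intro: set_times_intro)
    then have "dim (A * M) \<le> dim (insert 0 (A * (M - {0})))"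
      using \<open>finite A\<close> \<open>finite M\<close> by (intro dim_subset_finite) (simp_all add: finite_set_times)
    ultimately show ?thesis
      using span_eq_dim[OF span_insert_0] by simp
  qed
  then show ?thesis
    using that[of "M - {0}"] \<open>finite M\<close> unfolding doubling_def by blast
qed

lemma mutually_independent_blocks:
  fixes x :: "'f \<times> 'c \<Rightarrow> 'r" and A :: "'i \<Rightarrow> 'f set"
  assumes inj: "inj_on x (F \<times> UNIV)" and indep: "independent (x ` (F \<times> UNIV))"
    and sub: "\<And>i. i \<in> I \<Longrightarrow> A i \<subseteq> F"
    and disj: "\<And>i j. i \<in> I \<Longrightarrow> j \<in> I \<Longrightarrow> i \<noteq> j \<Longrightarrow> A i \<inter> A j = {}"
  shows "mutually_independent scale (I \<times> UNIV) (\<lambda>(i, b). (\<lambda>f. x (f, b)) ` A i)"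
  unfolding mutually_independent_def
proof (intro conjI ballI impI)
  fix u v :: "'i \<times> 'c"
  assume "u \<in> I \<times> UNIV" "v \<in> I \<times> UNIV" "u \<noteq> v"
  then obtain i b j c where ij: "u = (i, b)" "v = (j, c)" "i \<in> I" "j \<in> I"
    by auto
  show "(case u of (i, b) \<Rightarrow> (\<lambda>f. x (f, b)) ` A i) \<inter> (case v of (i, b) \<Rightarrow> (\<lambda>f. x (f, b)) ` A i) = {}"
  proof (rule ccontr)
    assume "\<not> ?thesis"
    then obtain f f' where f: "f \<in> A i" "f' \<in> A j" "x (f, b) = x (f', c)"
      unfolding ij by auto
    then have "(f, b) = (f', c)"
      using inj_onD[OF inj] sub ij(3,4) by blast
    then show False
      using f disj[of i j] \<open>u \<noteq> v\<close> ij by auto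
  qed
next
  have "(\<Union>u\<in>I \<times> UNIV. (case u of (i, b) \<Rightarrow> (\<lambda>f. x (f, b)) ` A i)) \<subseteq> x ` (F \<times> UNIV)"
    using sub by fastforce
  then show "independent (\<Union>u\<in>I \<times> UNIV. (case u of (i, b) \<Rightarrow> (\<lambda>f. x (f, b)) ` A i))"
    using independent_mono[OF indep] by blast
qed

lemma paradoxical_decomposition_if_multipliers:
  fixes \<sigma> :: "'r \<Rightarrow> bool \<Rightarrow> 'r"
  assumes "finite S" and "0 \<notin> S" and \<sigma>: "\<And>f b. f \<in> F \<Longrightarrow> \<sigma> f b \<in> S"
    and inj: "inj_on (\<lambda>(f, b). f * \<sigma> f b) (F \<times> UNIV)"
    and indep: "independent ((\<lambda>(f, b). f * \<sigma> f b) ` (F \<times> UNIV))"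
  shows "paradoxical_decomposition scale F"
proof -
  define m where "m = card (S \<times> S)"
  obtain p where p: "bij_betw p {..<m} (S \<times> S)"
    using ex_bij_betw_nat_finite[of "S \<times> S"] \<open>finite S\<close> unfolding m_def atLeast0LessThan by auto
  define A where "A i = {f \<in> F. (\<sigma> f True, \<sigma> f False) = p i}" for i
  define g where "g i = fst (p i)" for i
  define h where "h i = snd (p i)" for i
  have "(\<sigma> f True, \<sigma> f False) \<in> p ` {..<m}" if "f \<in> F" for f
    using \<sigma>[OF that] p unfolding bij_betw_def by auto
  then have "F = (\<Union>i<m. A i)"
    unfolding A_def by blast
  moreover have disj: "A i \<inter> A j = {}" if "i < m" "j < m" "i \<noteq> j" for i j
    using p that unfolding A_def bij_betw_def inj_on_def by auto
  moreover have "g i \<noteq> 0 \<and> h i \<noteq> 0" if "i < m" for i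
  proof -
    have "p i \<in> S \<times> S"
      using p that unfolding bij_betw_def by auto
    then show ?thesis
      using \<open>0 \<notin> S\<close> unfolding g_def h_def by (auto simp: mem_Times_iff)
  qed
  moreover have "(\<lambda>(i, b). if b then right_mult_set (A i) (g i) else right_mult_set (A i) (h i))
      = (\<lambda>(i, b). (\<lambda>f. f * \<sigma> f b) ` A i)"
    by (auto simp: fun_eq_iff right_mult_set_def A_def g_def h_def prod_eq_iff intro!: image_cong)
  moreover have "mutually_independent scale ({..<m} \<times> UNIV) (\<lambda>(i, b). (\<lambda>f. f * \<sigma> f b) ` A i)"
    using mutually_independent_blocks[OF inj indep, of "{..<m}" A] disj unfolding A_def by auto
  ultimately show ?thesis
    unfolding paradoxical_decomposition_def by (intro exI[of _ m] exI[of _ A] exI[of _ g] exI[of _ h]) auto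
qed

lemma rado_condition_if_doubling:
  assumes "doubling scale S" and "independent F"
  shows "rado_condition scale (F \<times> (UNIV :: bool set)) (\<lambda>(f, b). (\<lambda>s. f * s) ` S)"
  unfolding rado_condition_def
proof (intro allI impI)
  fix J :: "('r \<times> bool) set"
  assume J: "J \<subseteq> F \<times> UNIV" "finite J"
  have "fst ` J \<subseteq> F"
    using J(1) by auto
  then have "independent (fst ` J)"
    using independent_mono[OF \<open>independent F\<close>] by blast
  have "J \<subseteq> fst ` J \<times> UNIV"
    by force
  then have "card J \<le> 2 * card (fst ` J)"
    using card_mono[of "fst ` J \<times> UNIV" J] J(2) by (simp add: card_cartesian_product)
  also have "\<dots> \<le> dim (fst ` J * S)"
    using \<open>doubling scale S\<close> \<open>independent (fst ` J)\<close> J(2) unfolding doubling_def by simp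
  also have "fst ` J * S = \<Union>((\<lambda>(f, b). (\<lambda>s. f * s) ` S) ` J)"
    unfolding set_times_def by force
  finally show "card J \<le> dim (\<Union>((\<lambda>(f, b). (\<lambda>s. f * s) ` S) ` J))" .
qed

lemma multipliers_if_doubling:
  assumes "finite S" and "doubling scale S" and "independent F" and "countable F"
  obtains \<sigma> :: "'r \<Rightarrow> bool \<Rightarrow> 'r" where "\<And>f b. f \<in> F \<Longrightarrow> \<sigma> f b \<in> S"
    and "inj_on (\<lambda>(f, b). f * \<sigma> f b) (F \<times> UNIV)"
    and "independent ((\<lambda>(f, b). f * \<sigma> f b) ` (F \<times> UNIV))"
proof -
  define I where "I = F \<times> (UNIV :: bool set)"
  define X :: "'r \<times> bool \<Rightarrow> 'r set" where "X = (\<lambda>(f, b). (\<lambda>s. f * s) ` S)"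
  have "countable I" "rado_condition scale I X" "\<And>p. finite (X p)"
    unfolding I_def X_def using \<open>countable F\<close> rado_condition_if_doubling[OF assms(2,3)] \<open>finite S\<close>
    by (auto split: prod.split)
  then obtain x where x: "\<And>p. p \<in> I \<Longrightarrow> x p \<in> X p" "inj_on x I" "independent (x ` I)"
    using rado_transversal[of I X] by blast
  define \<sigma> where "\<sigma> f b = (SOME s. s \<in> S \<and> x (f, b) = f * s)" for f b
  have \<sigma>: "\<sigma> f b \<in> S \<and> x (f, b) = f * \<sigma> f b" if "f \<in> F" for f b
  proof -
    have "\<exists>s. s \<in> S \<and> x (f, b) = f * s"
      using x(1)[of "(f, b)"] that unfolding I_def X_def by auto
    then show ?thesis
      unfolding \<sigma>_def by (rule someI_ex)
  qed
  then have eq: "(\<lambda>(f, b). f * \<sigma> f b) p = x p" if "p \<in> I" for p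
    using that unfolding I_def by auto
  have "inj_on (\<lambda>(f, b). f * \<sigma> f b) I = inj_on x I"
    by (rule inj_on_cong) (rule eq)
  moreover have "(\<lambda>(f, b). f * \<sigma> f b) ` I = x ` I"
    using image_cong[OF refl eq] .
  ultimately show ?thesis
    using that[of \<sigma>] \<sigma> x(2,3) unfolding I_def by simp
qed

lemma paradoxical_if_trivial:
  assumes "\<And>z::'r. z = 0"
  shows "paradoxical scale"
  unfolding paradoxical_iff_decompositions
proof (intro allI impI)
  fix F :: "'r set"
  assume "independent F \<and> span F = UNIV"
  then have "0 \<notin> F"
    using dependent_zero by blast
  moreover have "F \<subseteq> {0}"
    using assms by auto
  ultimately have "F = {}"
    by blast
  then show "paradoxical_decomposition scale F"
    unfolding paradoxical_decomposition_def mutually_independent_def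
    using independent_empty by (intro exI[of _ 0]) auto
qed

end

context finitely_generated_algebra
begin

lemma paradoxical_if_doubling:
  assumes "finite S" and "0 \<notin> S" and "doubling scale S"
  shows "paradoxical scale"
  unfolding paradoxical_iff_decompositions
proof (intro allI impI)
  fix F
  assume "independent F \<and> span F = UNIV"
  then have "independent F" "countable F"
    using countable_if_independent by blast+
  then obtain \<sigma> :: "'r \<Rightarrow> bool \<Rightarrow> 'r" where "\<And>f b. f \<in> F \<Longrightarrow> \<sigma> f b \<in> S"
    "inj_on (\<lambda>(f, b). f * \<sigma> f b) (F \<times> UNIV)" "independent ((\<lambda>(f, b). f * \<sigma> f b) ` (F \<times> UNIV))"
    using multipliers_if_doubling[OF \<open>finite S\<close> \<open>doubling scale S\<close>] by blast
  then show "paradoxical_decomposition scale F"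
    by (rule paradoxical_decomposition_if_multipliers[OF \<open>finite S\<close> \<open>0 \<notin> S\<close>])
qed

end

lemma finitely_generated_algebra_if_affine:
  assumes "affine_algebra scale"
  obtains G where "finitely_generated_algebra scale G"
proof -
  obtain G where G: "finite G" "\<And>S. subalgebra scale S \<Longrightarrow> G \<subseteq> S \<Longrightarrow> S = UNIV"
    using assms unfolding affine_algebra_def by blast
  have alg: "vector_space scale" "\<And>a x y. scale a (x * y) = scale a x * y"
    "\<And>a x y. scale a (x * y) = x * scale a y"
    using assms unfolding affine_algebra_def algebra_over_def by blast+
  have "finitely_generated_algebra scale G"
    by (intro finitely_generated_algebra.intro assoc_algebra.intro assoc_algebra_axioms.intro
        finitely_generated_algebra_axioms.intro alg G)
  then show ?thesis
    by (rule that)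
qed

theorem proposition2:
  fixes scale :: "'k::field \<Rightarrow> 'r::ring \<Rightarrow> 'r"
  assumes "affine_algebra scale"
    and "no_zero_divisors_alg TYPE('r)"
    and "\<not> amenable scale"
  shows "paradoxical scale"
proof -
  obtain G where "finitely_generated_algebra scale G"
    using assms(1) by (rule finitely_generated_algebra_if_affine)
  then interpret finitely_generated_algebra scale G .
  have no_zero_divisors: "\<And>x y::'r. x * y = 0 \<Longrightarrow> x = 0 \<or> y = 0"
    using assms(2) unfolding no_zero_divisors_alg_def by blast
  show ?thesis
  proof (cases "\<exists>B. finite B \<and> span B = UNIV")
    case True
    \<comment> \<open>Because \<open>0 / 0 = 0\<close>, the zero algebra counts as non-amenable; its only basis is empty.\<close>
    then show ?thesis
      using amenable_if_finite_dimensional paradoxical_if_trivial assms(3) by blast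
  next
    case False
    then obtain n and \<epsilon> :: real where "0 < \<epsilon>"
      and "\<And>X. finite X \<Longrightarrow> 0 < dim X \<Longrightarrow> (1 + \<epsilon>) * dim X \<le> dim (X \<union> X * monomials G n)"
      using amenable_if_folner[OF no_zero_divisors] assms(3) by (meson not_less)
    then obtain S where "finite S" "0 \<notin> S" "doubling scale S"
      using doubling_if_expanding[OF finite_monomials[OF finite_generators]] by blast
    then show ?thesis
      by (rule paradoxical_if_doubling)
  qed
qed

end
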